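(* Let $G=(V,E)$ be a finite connected undirected unweighted graph, let $\lambda\in[0,1]$, and consider the $\lambda$-mixed Moran process on $G$ with mutant fitness $r=1$. Then for every $S\subseteq V$, \[\mathrm{fp}^{\lambda,1}_G(S)=\sum_{u\in S}\mathrm{fp}^{\lambda,1}_G(\{u\}).\]
   Context: The $\lambda$-mixed Moran process on a connected graph $G=(V,E)$ with $n=|V|\ge 2$ vertices: each vertex hosts either a resident (fitness $1$) or a mutant (fitness $r>0$); the state (configuration) is the set $S_t\subseteq V$ of mutant vertices. $N(u)$ is the neighbor set of $u$, $\deg_u=|N(u)|$. At each discrete step, independently: with probability $\lambda$ a Birth-death (Bd) step occurs, in which a vertex $u$ is chosen with probability proportional to its fitness (among all $n$ vertices), then a uniformly random neighbor $v\in N(u)$ is replaced by an offspring of the type of $u$; with probability $1-\lambda$ a death-Birth (dB) step occurs, in which a vertex $v$ is chosen uniformly at random to die, then a neighbor $u\in N(v)$ is chosen with probability proportional to fitness (among $N(v)$) and $v$ takes the type of $u$. The process is absorbed when $S_t=\emptyset$ (extinction) or $S_t=V$ (fixation). $\mathrm{fp}^{\lambda,r}_G(S)$ denotes the probability that the process started from $S_0=S$ reaches $S_t=V$ at some time. *)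

theory Defs
  imports Complex_Main
begin

definition graph :: "'a set \<Rightarrow> ('a \<Rightarrow> 'a \<Rightarrow> bool) \<Rightarrow> bool" where
  "graph V E \<longleftrightarrow> finite V \<and> (\<forall>u v. E u v \<longrightarrow> u \<in> V \<and> v \<in> V)
     \<and> (\<forall>u v. E u v \<longrightarrow> E v u) \<and> (\<forall>u. \<not> E u u)"

definition connected_graph :: "'a set \<Rightarrow> ('a \<Rightarrow> 'a \<Rightarrow> bool) \<Rightarrow> bool" where
  "connected_graph V E \<longleftrightarrow> graph V E \<and> (\<forall>u\<in>V. \<forall>v\<in>V. E\<^sup>*\<^sup>* u v)"

definition nbrs :: "('a \<Rightarrow> 'a \<Rightarrow> bool) \<Rightarrow> 'a \<Rightarrow> 'a set" where
  "nbrs E u = {v. E u v}"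

text \<open>Fitness of vertex u in configuration S (S = set of mutants).\<close>
definition fit :: "real \<Rightarrow> 'a set \<Rightarrow> 'a \<Rightarrow> real" where
  "fit r S u = (if u \<in> S then r else 1)"

text \<open>Offspring of u replaces v.\<close>
definition repl :: "'a set \<Rightarrow> 'a \<Rightarrow> 'a \<Rightarrow> 'a set" where
  "repl S u v = (if u \<in> S then insert v S else S - {v})"

text \<open>reach V E lam r t S: probability that the lambda-mixed Moran process started
in S is in state V (fixation) at some time \<le> t (V is absorbing). First-step analysis.\<close>
primrec reach :: "'a set \<Rightarrow> ('a \<Rightarrow> 'a \<Rightarrow> bool) \<Rightarrow> real \<Rightarrow> real \<Rightarrow> nat \<Rightarrow> 'a set \<Rightarrow> real" where
  "reach V E lam r 0 S = (if S = V then 1 else 0)"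
| "reach V E lam r (Suc t) S =
     (if S = V then 1 else
        lam * (\<Sum>u\<in>V. \<Sum>v\<in>nbrs E u.
                  (fit r S u / (\<Sum>w\<in>V. fit r S w)) * (1 / real (card (nbrs E u)))
                  * reach V E lam r t (repl S u v))
      + (1 - lam) * (\<Sum>v\<in>V. \<Sum>u\<in>nbrs E v.
                  (1 / real (card V)) * (fit r S u / (\<Sum>w\<in>nbrs E v. fit r S w))
                  * reach V E lam r t (repl S u v)))"

definition fp :: "'a set \<Rightarrow> ('a \<Rightarrow> 'a \<Rightarrow> bool) \<Rightarrow> real \<Rightarrow> real \<Rightarrow> 'a set \<Rightarrow> real" where
  "fp V E lam r S = (SUP t. reach V E lam r t S)"

end

theory Submission
  imports Defs "Jordan_Normal_Form.Determinant"
begin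

(* With r = 1 all vertices have the same fitness, so one step of the process moves from S to
   repl S u v with a probability edge_prob u v that depends only on the ordered edge (u, v), not
   on S.  Hence fp is harmonic for the one-step averaging operator step_mean away from the two
   absorbing states, with boundary values fp V = 1 and fp {} = 0, and on a connected graph a
   maximum principle shows that such a function is unique.  An additive set function
   S |-> (sum of w x over x in S) is harmonic as soon as w solves a square linear system whose
   columns sum to zero, and such a system has a nonzero solution.  By uniqueness the total weight
   of this solution is nonzero, and after normalisation the additive function equals fp. *)

lemma mat_column_sums_zero_imp_kernel:
  fixes A :: "'a::field mat"
  assumes A: "A \<in> carrier_mat n n" and "n > 0" and col: "\<And>j. j < n \<Longrightarrow> (\<Sum>i<n. A $$ (i, j)) = 0"
  shows "\<exists>v. v \<in> carrier_vec n \<and> v \<noteq> 0\<^sub>v n \<and> A *\<^sub>v v = 0\<^sub>v n"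
proof -
  have "transpose_mat A *\<^sub>v vec n (\<lambda>_. 1) = 0\<^sub>v n"
    using A col by (intro eq_vecI) (auto simp: scalar_prod_def atLeast0LessThan)
  moreover have "vec n (\<lambda>_. 1) \<noteq> (0\<^sub>v n :: 'a vec)"
    using \<open>n > 0\<close> by (metis index_vec index_zero_vec(1) zero_neq_one)
  ultimately have "det (transpose_mat A) = 0"
    using A by (subst det_0_iff_vec_prod_zero_field) (auto intro!: exI[of _ "vec n (\<lambda>_. 1)"])
  then show ?thesis
    using A det_0_iff_vec_prod_zero_field[OF A] by (simp add: det_transpose)
qed

lemma zero_column_sums_imp_nontrivial_kernel:
  fixes c :: "'a \<Rightarrow> 'a \<Rightarrow> 'b::field"
  assumes "finite V" and "V \<noteq> {}" and "\<And>y. y \<in> V \<Longrightarrow> (\<Sum>x\<in>V. c x y) = 0"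
  shows "\<exists>w. (\<forall>x\<in>V. (\<Sum>y\<in>V. c x y * w y) = 0) \<and> (\<exists>x\<in>V. w x \<noteq> 0)"
proof -
  obtain xs where "set xs = V" and "distinct xs"
    using finite_distinct_list[OF \<open>finite V\<close>] by blast
  define n where "n = length xs"
  have bij: "bij_betw ((!) xs) {..<n} V"
    using \<open>distinct xs\<close> \<open>set xs = V\<close> by (intro bij_betw_nth) (auto simp: n_def)
  have sum_V: "(\<Sum>x\<in>V. g x) = (\<Sum>i<n. g (xs ! i))" for g :: "'a \<Rightarrow> 'b"
    using sum.reindex_bij_betw[OF bij, of g] by simp
  define A where "A = mat n n (\<lambda>(i, j). c (xs ! i) (xs ! j))"
  have "n > 0"
    using \<open>V \<noteq> {}\<close> \<open>set xs = V\<close> by (auto simp: n_def)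
  moreover have "(\<Sum>i<n. A $$ (i, j)) = 0" if "j < n" for j
    using assms(3)[of "xs ! j"] bij_betw_apply[OF bij] that by (simp add: A_def sum_V)
  ultimately obtain v where v: "v \<in> carrier_vec n" "v \<noteq> 0\<^sub>v n" "A *\<^sub>v v = 0\<^sub>v n"
    using mat_column_sums_zero_imp_kernel[of A n] by (auto simp: A_def)
  define w where "w x = v $ inv_into {..<n} ((!) xs) x" for x
  have w_nth: "w (xs ! i) = v $ i" if "i < n" for i
    using bij that by (simp add: w_def bij_betw_inv_into_left)
  have "(\<Sum>y\<in>V. c x y * w y) = 0" if "x \<in> V" for x
  proof -
    obtain i where "i < n" and "x = xs ! i"
      using bij \<open>x \<in> V\<close> by (metis bij_betw_imp_surj_on imageE lessThan_iff)
    then have "(\<Sum>y\<in>V. c x y * w y) = (A *\<^sub>v v) $ i"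
      using v(1) by (simp add: sum_V w_nth A_def scalar_prod_def atLeast0LessThan)
    then show ?thesis
      using v(3) \<open>i < n\<close> by simp
  qed
  moreover have "\<exists>x\<in>V. w x \<noteq> 0"
  proof (rule ccontr)
    assume "\<not> (\<exists>x\<in>V. w x \<noteq> 0)"
    then have "v $ i = 0" if "i < n" for i
      using w_nth[OF that] bij_betw_apply[OF bij] that by auto
    then have "v = 0\<^sub>v n"
      using v(1) by (intro eq_vecI) auto
    then show False
      using v(2) by contradiction
  qed
  ultimately show ?thesis
    by blast
qed

lemma rtranclp_exit_edge:
  "r\<^sup>*\<^sup>* x y \<Longrightarrow> x \<in> S \<Longrightarrow> y \<notin> S \<Longrightarrow> \<exists>u v. u \<in> S \<and> v \<notin> S \<and> r u v"
proof (induction rule: rtranclp_induct)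
  case (step y z)
  then show ?case by (cases "y \<in> S") auto
qed simp

locale neutral_mixed_moran =
  fixes V :: "'a set" and E :: "'a \<Rightarrow> 'a \<Rightarrow> bool" and lam :: real
  assumes connected: "connected_graph V E" and card_V_ge_2: "card V \<ge> 2"
    and lam_nonneg: "0 \<le> lam" and lam_le_1: "lam \<le> 1"
begin

abbreviation reach1 :: "nat \<Rightarrow> 'a set \<Rightarrow> real" where
  "reach1 t S \<equiv> reach V E lam 1 t S"

abbreviation fp1 :: "'a set \<Rightarrow> real" where
  "fp1 S \<equiv> fp V E lam 1 S"

lemma finite_V: "finite V"
  using connected by (simp add: connected_graph_def graph_def)

lemma edge_in_V: "E u v \<Longrightarrow> u \<in> V \<and> v \<in> V"
  using connected by (simp add: connected_graph_def graph_def)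

lemma edge_sym: "E u v \<longleftrightarrow> E v u"
  using connected by (auto simp: connected_graph_def graph_def)

lemma V_nonempty: "V \<noteq> {}"
  using card_V_ge_2 by auto

lemma sum_nbrs_eq_sum_if: "(\<Sum>v\<in>nbrs E u. g v) = (\<Sum>v\<in>V. if E u v then g v else 0)"
proof -
  have "nbrs E u = {v \<in> V. E u v}"
    using edge_in_V by (auto simp: nbrs_def)
  then show ?thesis
    using finite_V by (simp add: sum.inter_filter)
qed

lemma card_nbrs_pos:
  assumes "u \<in> V"
  shows "card (nbrs E u) > 0"
proof -
  have "\<not> (\<forall>a\<in>V. \<forall>b\<in>V. a = b)"
    using card_V_ge_2 card_le_Suc0_iff_eq[OF finite_V] by simp
  then obtain v where "v \<in> V" and "v \<noteq> u"
    using assms by blast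
  then have "E\<^sup>*\<^sup>* u v"
    using connected assms by (simp add: connected_graph_def)
  then obtain z where "E u z"
    using rtranclp_exit_edge[of E u v "{u}"] \<open>v \<noteq> u\<close> by auto
  moreover have "finite (nbrs E u)"
    using finite_V edge_in_V by (auto simp: nbrs_def intro: finite_subset)
  ultimately show ?thesis
    by (auto simp: nbrs_def card_gt_0_iff)
qed

lemma repl_empty [simp]: "repl {} u v = {}"
  by (simp add: repl_def)

lemma repl_subset: "S \<subseteq> V \<Longrightarrow> v \<in> V \<Longrightarrow> repl S u v \<subseteq> V"
  by (auto simp: repl_def)

text \<open>A step of the process with \<open>r = 1\<close> lets \<open>u\<close> reproduce onto its neighbour \<open>v\<close> with
  probability \<open>1/n \<cdot> 1/deg u\<close> in a Birth-death step and \<open>1/n \<cdot> 1/deg v\<close> in a death-Birth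
  step, independently of the current state.\<close>
definition edge_prob :: "'a \<Rightarrow> 'a \<Rightarrow> real" where
  "edge_prob u v =
     lam / (real (card V) * card (nbrs E u)) + (1 - lam) / (real (card V) * card (nbrs E v))"

definition step_mean :: "('a set \<Rightarrow> real) \<Rightarrow> 'a set \<Rightarrow> real" where
  "step_mean f S = (\<Sum>u\<in>V. \<Sum>v\<in>V. if E u v then edge_prob u v * f (repl S u v) else 0)"

definition harmonic :: "('a set \<Rightarrow> real) \<Rightarrow> bool" where
  "harmonic f \<longleftrightarrow> (\<forall>S\<subseteq>V. S \<noteq> {} \<longrightarrow> S \<noteq> V \<longrightarrow> f S = step_mean f S)"

lemma edge_prob_pos:
  assumes "E u v"
  shows "edge_prob u v > 0"
proof -
  let ?nu = "real (card V) * card (nbrs E u)" and ?nv = "real (card V) * card (nbrs E v)"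
  have "?nu > 0" and "?nv > 0"
    using assms edge_in_V card_nbrs_pos V_nonempty finite_V by (auto simp: card_gt_0_iff)
  then have "lam / ?nu \<ge> 0" and "(1 - lam) / ?nv \<ge> 0" and "lam / ?nu > 0 \<or> (1 - lam) / ?nv > 0"
    using lam_nonneg lam_le_1 by (auto simp: less_eq_real_def)
  then show ?thesis
    unfolding edge_prob_def by linarith
qed

lemma sum_nbrs_divide_card: "u \<in> V \<Longrightarrow> (\<Sum>v\<in>V. if E u v then c / card (nbrs E u) else 0) = c"
  using card_nbrs_pos by (simp flip: sum_nbrs_eq_sum_if)

lemma sum_edge_prob: "(\<Sum>u\<in>V. \<Sum>v\<in>V. if E u v then edge_prob u v else 0) = 1"
proof -
  let ?n = "real (card V)"
  have "(\<Sum>u\<in>V. \<Sum>v\<in>V. if E u v then edge_prob u v else 0)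
      = (\<Sum>u\<in>V. \<Sum>v\<in>V. if E u v then lam / ?n / card (nbrs E u) else 0)
        + (\<Sum>v\<in>V. \<Sum>u\<in>V. if E v u then (1 - lam) / ?n / card (nbrs E v) else 0)"
    by (subst (2) sum.swap)
      (simp add: edge_prob_def edge_sym sum.distrib[symmetric] if_distrib cong: if_cong)
  also have "\<dots> = (\<Sum>u\<in>V. lam / ?n) + (\<Sum>v\<in>V. (1 - lam) / ?n)"
    by (simp add: sum_nbrs_divide_card)
  also have "\<dots> = 1"
    using V_nonempty finite_V by (simp add: field_simps)
  finally show ?thesis .
qed

lemma step_mean_const [simp]: "step_mean (\<lambda>_. c) S = c"
proof -
  have "step_mean (\<lambda>_. c) S = c * (\<Sum>u\<in>V. \<Sum>v\<in>V. if E u v then edge_prob u v else 0)"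
    unfolding step_mean_def sum_distrib_left by (intro sum.cong) auto
  then show ?thesis
    by (simp add: sum_edge_prob)
qed

lemma step_mean_diff: "step_mean (\<lambda>X. f X - g X) S = step_mean f S - step_mean g S"
  unfolding step_mean_def by (simp add: sum_subtractf[symmetric] right_diff_distrib if_distrib cong: if_cong)

lemma step_mean_scale: "step_mean (\<lambda>X. c * f X) S = c * step_mean f S"
  unfolding step_mean_def by (simp add: sum_distrib_left if_distrib algebra_simps cong: if_cong)

lemma step_mean_mono: "(\<And>X. f X \<le> g X) \<Longrightarrow> step_mean f S \<le> step_mean g S"
  unfolding step_mean_def
  by (intro sum_mono) (auto intro: mult_left_mono less_imp_le edge_prob_pos)

lemma tendsto_step_mean:
  assumes "\<And>X. (\<lambda>t. f t X) \<longlonglongrightarrow> g X"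
  shows "(\<lambda>t. step_mean (f t) S) \<longlonglongrightarrow> step_mean g S"
  unfolding step_mean_def
proof (intro tendsto_sum)
  fix u v
  show "(\<lambda>t. if E u v then edge_prob u v * f t (repl S u v) else 0)
      \<longlonglongrightarrow> (if E u v then edge_prob u v * g (repl S u v) else 0)"
    by (cases "E u v") (auto intro: tendsto_mult_left assms)
qed

lemma step_mean_nonneg_eq_0D:
  assumes nonneg: "\<And>X. X \<subseteq> V \<Longrightarrow> f X \<ge> 0" and "step_mean f S = 0" and "S \<subseteq> V" and "E u v"
  shows "f (repl S u v) = 0"
proof -
  let ?term = "\<lambda>u v. if E u v then edge_prob u v * f (repl S u v) else 0"
  have term_nonneg: "?term u' v' \<ge> 0" if "v' \<in> V" for u' v'
    using nonneg repl_subset[OF \<open>S \<subseteq> V\<close> that] edge_prob_pos by (simp add: less_imp_le)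
  have "\<forall>u'\<in>V. (\<Sum>v'\<in>V. ?term u' v') = 0"
    using \<open>step_mean f S = 0\<close> finite_V term_nonneg
    by (subst sum_nonneg_eq_0_iff[symmetric]) (auto simp: step_mean_def intro: sum_nonneg)
  then have "\<forall>v'\<in>V. ?term u v' = 0"
    using \<open>E u v\<close> edge_in_V finite_V term_nonneg by (subst sum_nonneg_eq_0_iff[symmetric]) auto
  moreover have "v \<in> V"
    using \<open>E u v\<close> edge_in_V by blast
  ultimately have "edge_prob u v * f (repl S u v) = 0"
    using \<open>E u v\<close> by fastforce
  moreover have "edge_prob u v \<noteq> 0"
    using edge_prob_pos[OF \<open>E u v\<close>] by simp
  ultimately show ?thesis
    by simp
qed

lemma reach_Suc:
  assumes "S \<noteq> V"
  shows "reach1 (Suc t) S = step_mean (reach1 t) S"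
proof -
  let ?f = "reach1 t"
  let ?n = "real (card V)" and ?d = "\<lambda>u. real (card (nbrs E u))"
  have "reach1 (Suc t) S
      = (\<Sum>u\<in>V. \<Sum>v\<in>V. if E u v then lam / (?n * ?d u) * ?f (repl S u v) else 0)
        + (\<Sum>v\<in>V. \<Sum>u\<in>V. if E v u then (1 - lam) / (?n * ?d v) * ?f (repl S u v) else 0)"
    using assms
    by (simp add: fit_def sum_nbrs_eq_sum_if sum_distrib_left if_distrib cong: if_cong)
  also have "\<dots> = step_mean ?f S"
    unfolding step_mean_def edge_prob_def
    by (subst (2) sum.swap) (auto simp: edge_sym sum.distrib[symmetric] distrib_right intro!: sum.cong)
  finally show ?thesis .
qed

lemma reach_V: "reach1 t V = 1"
  by (cases t) auto

lemma reach_empty: "reach1 t {} = 0"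
proof (induction t)
  case (Suc t)
  have "reach1 (Suc t) {} = step_mean (reach1 t) {}"
    using reach_Suc V_nonempty by metis
  also have "\<dots> = step_mean (\<lambda>_. 0) {}"
    using Suc.IH by (simp add: step_mean_def cong: if_cong)
  finally show ?case
    by simp
qed (use V_nonempty in simp)

lemma reach_bounds: "0 \<le> reach1 t S \<and> reach1 t S \<le> 1"
proof (induction t arbitrary: S)
  case (Suc t)
  show ?case
  proof (cases "S = V")
    case False
    have "step_mean (\<lambda>_. 0) S \<le> step_mean (reach1 t) S"
      by (rule step_mean_mono) (simp add: Suc.IH)
    moreover have "step_mean (reach1 t) S \<le> step_mean (\<lambda>_. 1) S"
      by (rule step_mean_mono) (simp add: Suc.IH)
    ultimately show ?thesis
      unfolding reach_Suc[OF False] by simp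
  qed simp
qed simp

lemma reach_le_reach_Suc: "reach1 t S \<le> reach1 (Suc t) S"
proof (induction t arbitrary: S)
  case 0
  then show ?case
    using reach_bounds[of "Suc 0" S] by (cases "S = V") auto
next
  case (Suc t)
  show ?case
  proof (cases "S = V")
    case False
    show ?thesis
      unfolding reach_Suc[OF False] by (rule step_mean_mono) (rule Suc.IH)
  qed simp
qed

lemma reach_tendsto_fp: "(\<lambda>t. reach1 t S) \<longlonglongrightarrow> fp1 S"
  unfolding fp_def using reach_bounds
  by (intro LIMSEQ_incseq_SUP incseq_SucI reach_le_reach_Suc bdd_aboveI2[where M = 1]) auto

lemma fp_V: "fp1 V = 1"
  by (simp add: fp_def reach_V)

lemma fp_empty: "fp1 {} = 0"
  by (simp add: fp_def reach_empty)

lemma harmonic_fp: "harmonic fp1"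
  unfolding harmonic_def
proof (intro allI impI)
  fix S assume "S \<noteq> V"
  have "(\<lambda>t. reach1 (Suc t) S) \<longlonglongrightarrow> fp1 S"
    using reach_tendsto_fp LIMSEQ_Suc by blast
  moreover have "(\<lambda>t. reach1 (Suc t) S) \<longlonglongrightarrow> step_mean fp1 S"
    unfolding reach_Suc[OF \<open>S \<noteq> V\<close>] by (intro tendsto_step_mean reach_tendsto_fp)
  ultimately show "fp1 S = step_mean fp1 S"
    by (rule LIMSEQ_unique)
qed

lemma harmonic_diff: "harmonic f \<Longrightarrow> harmonic g \<Longrightarrow> harmonic (\<lambda>X. f X - g X)"
  by (simp add: harmonic_def step_mean_diff)

lemma harmonic_scale: "harmonic f \<Longrightarrow> harmonic (\<lambda>X. c * f X)"
  by (simp add: harmonic_def step_mean_scale)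

lemma harmonic_max_spreads:
  assumes "harmonic D" and "X \<subseteq> V" and "X \<noteq> {}" and "X \<noteq> V"
    and max: "\<And>Y. Y \<subseteq> V \<Longrightarrow> D Y \<le> D X" and "E u v"
  shows "D (repl X u v) = D X"
proof -
  have "step_mean (\<lambda>Y. D X - D Y) X = 0"
    using assms(1-4) by (simp add: harmonic_def step_mean_diff)
  then have "D X - D (repl X u v) = 0"
    using max \<open>X \<subseteq> V\<close> \<open>E u v\<close> by (intro step_mean_nonneg_eq_0D[where f = "\<lambda>Y. D X - D Y"]) auto
  then show ?thesis
    by simp
qed

lemma harmonic_max_attained_on_boundary:
  assumes "harmonic D" and "X \<subseteq> V" and "\<And>Y. Y \<subseteq> V \<Longrightarrow> D Y \<le> D X"
  shows "D X = D {} \<or> D X = D V"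
  using assms(2,3)
proof (induction "card (V - X)" arbitrary: X rule: less_induct)
  case less
  show ?case
  proof (cases "X = {} \<or> X = V")
    case False
    then have "X \<noteq> {}" and "X \<noteq> V"
      by auto
    then obtain x y where "x \<in> X" and "y \<in> V" and "y \<notin> X"
      using less.prems(1) by blast
    then have "E\<^sup>*\<^sup>* x y"
      using connected less.prems(1) by (auto simp: connected_graph_def)
    then obtain u v where "u \<in> X" and "v \<notin> X" and "E u v"
      using rtranclp_exit_edge \<open>x \<in> X\<close> \<open>y \<notin> X\<close> by metis
    have "D (repl X u v) = D X"
      using harmonic_max_spreads[OF assms(1) less.prems(1) \<open>X \<noteq> {}\<close> \<open>X \<noteq> V\<close> less.prems(2) \<open>E u v\<close>] .
    then have same: "D (insert v X) = D X"
      using \<open>u \<in> X\<close> by (simp add: repl_def)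
    have "v \<in> V"
      using edge_in_V[OF \<open>E u v\<close>] by simp
    then have "card (V - insert v X) < card (V - X)"
      using \<open>v \<notin> X\<close> finite_V by (intro psubset_card_mono) auto
    moreover have "insert v X \<subseteq> V"
      using less.prems(1) \<open>v \<in> V\<close> by simp
    ultimately show ?thesis
      using less.hyps[of "insert v X"] less.prems(2) by (simp add: same)
  qed auto
qed

lemma harmonic_le_0:
  assumes "harmonic D" and "D V \<le> 0" and "D {} \<le> 0" and "S \<subseteq> V"
  shows "D S \<le> 0"
proof -
  have "Max (D ` Pow V) \<in> D ` Pow V"
    using finite_V by (intro Max_in) auto
  then obtain X where "X \<subseteq> V" and X_max: "D X = Max (D ` Pow V)"
    by auto
  have max: "D Y \<le> D X" if "Y \<subseteq> V" for Y
    unfolding X_max using finite_V that by (intro Max_ge) auto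
  then have "D X \<le> 0"
    using harmonic_max_attained_on_boundary[OF assms(1) \<open>X \<subseteq> V\<close>] assms(2,3) by force
  then show ?thesis
    using max[OF \<open>S \<subseteq> V\<close>] by linarith
qed

lemma harmonic_unique:
  assumes "harmonic f" and "harmonic g" and "f V = g V" and "f {} = g {}" and "S \<subseteq> V"
  shows "f S = g S"
proof -
  have "f S - g S \<le> 0"
    using harmonic_le_0[of "\<lambda>X. f X - g X"] harmonic_diff assms by simp
  moreover have "g S - f S \<le> 0"
    using harmonic_le_0[of "\<lambda>X. g X - f X"] harmonic_diff assms by simp
  ultimately show ?thesis
    by simp
qed

definition balance :: "('a \<Rightarrow> real) \<Rightarrow> 'a \<Rightarrow> real" where
  "balance w x = (\<Sum>y\<in>V. if E x y then edge_prob x y * w y else 0)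
     - w x * (\<Sum>u\<in>V. if E u x then edge_prob u x else 0)"

lemma step_mean_sum:
  assumes "S \<subseteq> V"
  shows "step_mean (\<lambda>X. \<Sum>x\<in>X. w x) S = (\<Sum>x\<in>S. w x) + (\<Sum>x\<in>S. balance w x)"
proof -
  let ?\<phi> = "\<lambda>X. \<Sum>x\<in>X. w x"
  have "finite S"
    using assms finite_V finite_subset by blast
  then have jump: "?\<phi> (repl S u v) - ?\<phi> S = (if u \<in> S then w v else 0) - (if v \<in> S then w v else 0)"
    for u v
    by (cases "u \<in> S"; cases "v \<in> S") (auto simp: repl_def insert_absorb sum_diff1)
  have restrict: "(\<Sum>x\<in>V. if x \<in> S then g x else 0) = (\<Sum>x\<in>S. g x)" for g :: "'a \<Rightarrow> real"
    using assms sum.inter_restrict[OF finite_V, of g S] by (simp add: Int_absorb1)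
  have out: "(\<Sum>u\<in>V. \<Sum>v\<in>V. if E u v then edge_prob u v * (if u \<in> S then w v else 0) else 0)
      = (\<Sum>x\<in>S. \<Sum>y\<in>V. if E x y then edge_prob x y * w y else 0)"
    unfolding restrict[symmetric] by (intro sum.cong) (simp_all cong: if_cong)
  have into: "(\<Sum>u\<in>V. \<Sum>v\<in>V. if E u v then edge_prob u v * (if v \<in> S then w v else 0) else 0)
      = (\<Sum>x\<in>S. w x * (\<Sum>u\<in>V. if E u x then edge_prob u x else 0))"
    unfolding restrict[symmetric]
    by (subst sum.swap, intro sum.cong refl) (auto simp: sum_distrib_left cong: if_cong intro!: sum.cong)
  have "step_mean ?\<phi> S - ?\<phi> S = step_mean (\<lambda>X. ?\<phi> X - ?\<phi> S) S"
    by (simp add: step_mean_diff)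
  also have "\<dots> = (\<Sum>u\<in>V. \<Sum>v\<in>V.
        (if E u v then edge_prob u v * (if u \<in> S then w v else 0) else 0)
      - (if E u v then edge_prob u v * (if v \<in> S then w v else 0) else 0))"
    unfolding step_mean_def jump by (intro sum.cong refl) (simp add: right_diff_distrib)
  also have "\<dots> = (\<Sum>x\<in>S. balance w x)"
    by (simp add: sum_subtractf out into balance_def)
  finally show ?thesis
    by simp
qed

lemma exists_balanced_weight: "\<exists>w. (\<forall>x\<in>V. balance w x = 0) \<and> (\<exists>x\<in>V. w x \<noteq> 0)"
proof -
  define K where "K x = (\<Sum>u\<in>V. if E u x then edge_prob u x else 0)" for x
  define c where "c x y = (if E x y then edge_prob x y else 0) - (if x = y then K x else 0)" for x y
  have "(\<Sum>x\<in>V. c x y) = 0" if "y \<in> V" for y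
    using that finite_V by (simp add: c_def K_def sum_subtractf)
  then obtain w where w: "\<forall>x\<in>V. (\<Sum>y\<in>V. c x y * w y) = 0" "\<exists>x\<in>V. w x \<noteq> 0"
    using zero_column_sums_imp_nontrivial_kernel[OF finite_V V_nonempty] by blast
  moreover have "(\<Sum>y\<in>V. c x y * w y) = balance w x" if "x \<in> V" for x
  proof -
    have "(\<Sum>y\<in>V. c x y * w y)
        = (\<Sum>y\<in>V. (if E x y then edge_prob x y * w y else 0) - (if x = y then K x * w y else 0))"
      by (intro sum.cong) (auto simp: c_def algebra_simps)
    also have "\<dots> = balance w x"
      using that finite_V by (simp add: sum_subtractf balance_def K_def mult.commute)
    finally show ?thesis .
  qed
  ultimately show ?thesis
    by auto
qed

theorem fp_additive:
  assumes "S \<subseteq> V"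
  shows "fp1 S = (\<Sum>u\<in>S. fp1 {u})"
proof -
  obtain w x0 where balanced: "\<forall>x\<in>V. balance w x = 0" and "x0 \<in> V" and "w x0 \<noteq> 0"
    using exists_balanced_weight by blast
  define \<phi> where "\<phi> = (\<lambda>X. \<Sum>x\<in>X. w x)"
  have "step_mean \<phi> X = \<phi> X" if "X \<subseteq> V" for X
  proof -
    have "(\<Sum>x\<in>X. balance w x) = 0"
      using balanced that by (intro sum.neutral) auto
    then show ?thesis
      using step_mean_sum[OF that, of w] by (simp add: \<phi>_def)
  qed
  then have "harmonic \<phi>"
    by (simp add: harmonic_def)
  have "\<phi> V \<noteq> 0"
  proof
    assume "\<phi> V = 0"
    then have "\<phi> {x0} = 0"
      using \<open>harmonic \<phi>\<close> \<open>x0 \<in> V\<close>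
      by (intro harmonic_unique[of \<phi> "\<lambda>_. 0" "{x0}"]) (auto simp: harmonic_def \<phi>_def)
    then show False
      using \<open>w x0 \<noteq> 0\<close> by (simp add: \<phi>_def)
  qed
  have fp_eq: "fp1 X = \<phi> X / \<phi> V" if "X \<subseteq> V" for X
    using harmonic_unique[OF harmonic_fp harmonic_scale[OF \<open>harmonic \<phi>\<close>, of "1 / \<phi> V"] _ _ that]
      fp_V fp_empty \<open>\<phi> V \<noteq> 0\<close> by (simp add: \<phi>_def)
  have "fp1 S = (\<Sum>u\<in>S. \<phi> {u} / \<phi> V)"
    using fp_eq[OF assms] by (simp add: \<phi>_def sum_divide_distrib)
  also have "\<dots> = (\<Sum>u\<in>S. fp1 {u})"
    using assms by (intro sum.cong) (auto simp: fp_eq)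
  finally show ?thesis .
qed

end

theorem mainTheorem1:
  fixes V :: "'a set" and E :: "'a \<Rightarrow> 'a \<Rightarrow> bool" and lam :: real and S :: "'a set"
  assumes "connected_graph V E" and "card V \<ge> 2"
    and "0 \<le> lam" and "lam \<le> 1" and "S \<subseteq> V"
  shows "fp V E lam 1 S = (\<Sum>u\<in>S. fp V E lam 1 {u})"
proof -
  interpret neutral_mixed_moran V E lam
    using assms(1-4) by unfold_locales
  show ?thesis
    using fp_additive[OF assms(5)] .
qed

end
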